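(* Let $G=\square_{i=1}^t G^{(i)}$ be a product graph of dimension $t$ and let $M\subseteq V(G)$ with $|M|=m\le t$. Then there exist pairwise (vertex-)disjoint projections $H_1,\dots,H_m$ of $G$, each of dimension at least $t-m+1$, such that every $v\in M$ lies in exactly one of $H_1,\dots,H_m$ (and each $H_j$ contains exactly one vertex of $M$). *)

theory Defs
  imports Main "HOL-Library.FuncSet"
begin

text \<open>Factor graphs G^(i), i < t, have vertex sets V i and adjacency E i.\<close>

definition prod_verts :: "(nat \<Rightarrow> 'a set) \<Rightarrow> nat \<Rightarrow> (nat \<Rightarrow> 'a) set" where
  "prod_verts V t = PiE {..<t} V"

definition prod_adj :: "(nat \<Rightarrow> 'a \<Rightarrow> 'a \<Rightarrow> bool) \<Rightarrow> nat \<Rightarrow> (nat \<Rightarrow> 'a) \<Rightarrow> (nat \<Rightarrow> 'a) \<Rightarrow> bool" where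
  "prod_adj E t x y = (\<exists>i<t. E i (x i) (y i) \<and> (\<forall>k<t. k \<noteq> i \<longrightarrow> x k = y k))"

text \<open>Projection: the (induced) subgraph obtained by fixing the coordinates in
  J \<subseteq> {..<t} to the values of a vertex u; its dimension is the number
  t - card J of free coordinates.\<close>

definition proj_verts :: "(nat \<Rightarrow> 'a set) \<Rightarrow> nat \<Rightarrow> nat set \<Rightarrow> (nat \<Rightarrow> 'a) \<Rightarrow> (nat \<Rightarrow> 'a) set" where
  "proj_verts V t J u = {x \<in> prod_verts V t. \<forall>i\<in>J. x i = u i}"

definition proj_dim :: "nat \<Rightarrow> nat set \<Rightarrow> nat" where
  "proj_dim t J = t - card J"

end

theory Submission
  imports Defs
begin

text \<open>Give each vertex v of M a set J v of coordinates and fix them to the values of v.  If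
  any two distinct vertices v, w of M differ in a coordinate of J v \<inter> J w, these projections are
  pairwise disjoint and each contains exactly one vertex of M.  Such sets with
  card (J v) \<le> card M - 1, hence projections of dimension at least t - card M + 1, exist by
  induction on M: pick a coordinate i in which two vertices of M differ, split M into the
  proper subsets of vertices with the same i-th coordinate, and add i to the sets obtained for
  each class; vertices in different classes are separated by i itself.\<close>

definition separating_coordinates :: "(('i \<Rightarrow> 'a) \<Rightarrow> 'i set) \<Rightarrow> ('i \<Rightarrow> 'a) set \<Rightarrow> bool" where
  "separating_coordinates J M \<longleftrightarrow> (\<forall>v\<in>M. \<forall>w\<in>M. v \<noteq> w \<longrightarrow> (\<exists>i\<in>J v \<inter> J w. v i \<noteq> w i))"

lemma separating_coordinatesD:
  "separating_coordinates J M \<Longrightarrow> v \<in> M \<Longrightarrow> w \<in> M \<Longrightarrow> v \<noteq> w \<Longrightarrow> \<exists>i\<in>J v \<inter> J w. v i \<noteq> w i"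
  unfolding separating_coordinates_def by blast

lemma separating_coordinates_exist:
  fixes M :: "('i \<Rightarrow> 'a) set"
  assumes "finite M" and "M \<subseteq> extensional I"
  shows "\<exists>J. (\<forall>v\<in>M. J v \<subseteq> I \<and> finite (J v) \<and> card (J v) < card M)
             \<and> separating_coordinates J M"
  using assms
proof (induction M rule: finite_psubset_induct)
  case (psubset M)
  show ?case
  proof (cases "\<exists>v\<in>M. \<exists>w\<in>M. v \<noteq> w")
    case False
    then have "separating_coordinates (\<lambda>_. {}) M"
      by (auto simp: separating_coordinates_def)
    moreover have "v \<in> M \<Longrightarrow> 0 < card M" for v
      using psubset.hyps card_gt_0_iff by blast
    ultimately show ?thesis by (intro exI[of _ "\<lambda>_. {}"]) auto
  next
    case True
    then obtain v w where vw: "v \<in> M" "w \<in> M" "v \<noteq> w" by blast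
    then obtain i where i: "i \<in> I" "v i \<noteq> w i"
      using psubset.prems extensionalityI by blast
    define C where "C a = {x \<in> M. x i = a}" for a
    have C_psubset: "C a \<subset> M" for a
    proof
      show "C a \<subseteq> M" unfolding C_def by blast
      show "C a \<noteq> M"
      proof
        assume "C a = M"
        then have "v i = a" "w i = a" using vw unfolding C_def by blast+
        with i show False by simp
      qed
    qed
    have "\<forall>a. \<exists>J. (\<forall>x\<in>C a. J x \<subseteq> I \<and> finite (J x) \<and> card (J x) < card (C a))
                  \<and> separating_coordinates J (C a)"
    proof
      fix a
      have "C a \<subseteq> extensional I" using C_psubset psubset.prems by blast
      then show "\<exists>J. (\<forall>x\<in>C a. J x \<subseteq> I \<and> finite (J x) \<and> card (J x) < card (C a))
                  \<and> separating_coordinates J (C a)"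
        by (rule psubset.IH[OF C_psubset])
    qed
    then obtain JC where JC:
      "\<And>a x. x \<in> C a \<Longrightarrow> JC a x \<subseteq> I \<and> finite (JC a x) \<and> card (JC a x) < card (C a)"
      "\<And>a. separating_coordinates (JC a) (C a)"
      by (auto dest!: choice)
    define J where "J x = insert i (JC (x i) x)" for x
    have "J x \<subseteq> I \<and> finite (J x) \<and> card (J x) < card M" if x: "x \<in> M" for x
    proof -
      have xC: "x \<in> C (x i)" using x unfolding C_def by simp
      have "card (J x) \<le> Suc (card (JC (x i) x))"
        using JC(1)[OF xC] unfolding J_def by (simp add: card_insert_if)
      also have "\<dots> < Suc (card (C (x i)))" using JC(1)[OF xC] by simp
      also have "\<dots> \<le> card M" using psubset_card_mono[OF psubset.hyps C_psubset] by (simp add: Suc_leI)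
      finally show ?thesis using JC(1)[OF xC] i(1) unfolding J_def by simp
    qed
    moreover have "separating_coordinates J M"
      unfolding separating_coordinates_def
    proof (intro ballI impI)
      fix x y assume xy: "x \<in> M" "y \<in> M" "x \<noteq> y"
      show "\<exists>k\<in>J x \<inter> J y. x k \<noteq> y k"
      proof (cases "x i = y i")
        case True
        then have "x \<in> C (x i)" "y \<in> C (x i)" using xy unfolding C_def by auto
        then show ?thesis
          using JC(2)[of "x i"] xy(3) True unfolding separating_coordinates_def J_def by auto
      qed (auto simp: J_def)
    qed
    ultimately show ?thesis by blast
  qed
qed

lemma prod_verts_subset_extensional: "prod_verts V t \<subseteq> extensional {..<t}"
  unfolding prod_verts_def PiE_def by blast

lemma proj_verts_self: "u \<in> prod_verts V t \<Longrightarrow> u \<in> proj_verts V t J u"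
  unfolding proj_verts_def by simp

lemma proj_verts_disjoint:
  assumes "i \<in> J \<inter> K" and "u i \<noteq> w i"
  shows "proj_verts V t J u \<inter> proj_verts V t K w = {}"
  using assms unfolding proj_verts_def by auto

lemma proj_verts_separating_disjoint:
  assumes "separating_coordinates J M" and "v \<in> M" and "w \<in> M" and "v \<noteq> w"
  shows "proj_verts V t (J v) v \<inter> proj_verts V t (J w) w = {}"
proof -
  obtain i where "i \<in> J v \<inter> J w" "v i \<noteq> w i"
    using separating_coordinatesD[OF assms] by blast
  then show ?thesis by (rule proj_verts_disjoint)
qed

lemma proj_verts_separating_inter:
  assumes "separating_coordinates J M" and "M \<subseteq> prod_verts V t" and "v \<in> M"
  shows "proj_verts V t (J v) v \<inter> M = {v}"
proof -
  have "w \<notin> proj_verts V t (J v) v" if w: "w \<in> M" "w \<noteq> v" for w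
  proof
    assume "w \<in> proj_verts V t (J v) v"
    moreover have "w \<in> proj_verts V t (J w) w"
      using w(1) assms(2) by (intro proj_verts_self) blast
    ultimately show False
      using proj_verts_separating_disjoint[OF assms(1,3) w(1)] w(2) by blast
  qed
  moreover have "v \<in> proj_verts V t (J v) v"
    using assms(2,3) by (intro proj_verts_self) blast
  ultimately show ?thesis using assms(3) by blast
qed

lemma bij_betw_reindex_singleton_traces:
  assumes u: "bij_betw u {0..<card M} M"
    and trace: "\<And>v. v \<in> M \<Longrightarrow> Q v \<inter> M = {v}"
    and disjoint: "\<And>v w. v \<in> M \<Longrightarrow> w \<in> M \<Longrightarrow> v \<noteq> w \<Longrightarrow> Q v \<inter> Q w = {}"
  shows "\<forall>j<card M. \<forall>k<card M. j \<noteq> k \<longrightarrow> Q (u j) \<inter> Q (u k) = {}"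
    and "\<forall>v\<in>M. \<exists>!j. j < card M \<and> v \<in> Q (u j)"
    and "\<forall>j<card M. card (Q (u j) \<inter> M) = 1"
proof -
  have uM: "j < card M \<Longrightarrow> u j \<in> M" for j
    using u by (auto dest: bij_betwE)
  have u_eq: "j < card M \<Longrightarrow> k < card M \<Longrightarrow> u j = u k \<longleftrightarrow> j = k" for j k
    using u unfolding bij_betw_def inj_on_def by auto
  show "\<forall>j<card M. \<forall>k<card M. j \<noteq> k \<longrightarrow> Q (u j) \<inter> Q (u k) = {}"
    using disjoint[OF uM uM] u_eq by blast
  show "\<forall>v\<in>M. \<exists>!j. j < card M \<and> v \<in> Q (u j)"
  proof
    fix v assume v: "v \<in> M"
    then obtain j where j: "j < card M" "v = u j"
      using u unfolding bij_betw_def by (metis atLeastLessThan_iff imageE)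
    show "\<exists>!j. j < card M \<and> v \<in> Q (u j)"
    proof (rule ex1I[of _ j])
      show "j < card M \<and> v \<in> Q (u j)" using trace v j by blast
      show "k = j" if "k < card M \<and> v \<in> Q (u k)" for k
        using that trace[OF uM, of k] v j u_eq by blast
    qed
  qed
  show "\<forall>j<card M. card (Q (u j) \<inter> M) = 1"
    using trace uM by simp
qed

theorem mainTheorem3:
  fixes V :: "nat \<Rightarrow> 'a set" and t :: nat and M :: "(nat \<Rightarrow> 'a) set"
  assumes "M \<subseteq> prod_verts V t" and "finite M" and "card M \<le> t"
  shows "\<exists>(J :: nat \<Rightarrow> nat set) (u :: nat \<Rightarrow> nat \<Rightarrow> 'a).
           (\<forall>j<card M. J j \<subseteq> {..<t} \<and> u j \<in> prod_verts V t
                     \<and> proj_dim t (J j) \<ge> t - card M + 1) \<and>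
           (\<forall>j<card M. \<forall>k<card M. j \<noteq> k \<longrightarrow>
                proj_verts V t (J j) (u j) \<inter> proj_verts V t (J k) (u k) = {}) \<and>
           (\<forall>v\<in>M. \<exists>!j. j < card M \<and> v \<in> proj_verts V t (J j) (u j)) \<and>
           (\<forall>j<card M. card (proj_verts V t (J j) (u j) \<inter> M) = 1)"
proof -
  have "M \<subseteq> extensional {..<t}"
    using assms(1) prod_verts_subset_extensional by blast
  then obtain J where J: "\<forall>v\<in>M. J v \<subseteq> {..<t} \<and> finite (J v) \<and> card (J v) < card M"
    and sep: "separating_coordinates J M"
    using separating_coordinates_exist[OF assms(2)] by blast
  obtain u where u: "bij_betw u {0..<card M} M"
    using ex_bij_betw_nat_finite assms(2) by blast
  have "\<forall>j<card M. J (u j) \<subseteq> {..<t} \<and> u j \<in> prod_verts V t \<and> proj_dim t (J (u j)) \<ge> t - card M + 1"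
  proof (intro allI impI)
    fix j assume "j < card M"
    then have "u j \<in> M" using bij_betwE[OF u] by simp
    then show "J (u j) \<subseteq> {..<t} \<and> u j \<in> prod_verts V t \<and> proj_dim t (J (u j)) \<ge> t - card M + 1"
      using J assms(1,3) unfolding proj_dim_def by auto
  qed
  moreover note bij_betw_reindex_singleton_traces[where Q = "\<lambda>v. proj_verts V t (J v) v", OF u
      proj_verts_separating_inter[OF sep assms(1)] proj_verts_separating_disjoint[OF sep]]
  ultimately show ?thesis
    by - (rule exI[of _ "\<lambda>j. J (u j)"], rule exI[of _ u], intro conjI)
qed

end
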